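(* Let $\beta\in(0,1)$, $n\ge1$, and $\mathbf{x}_0,\mathbf{x}_1,\dots,\mathbf{x}_n\in\mathbb{R}^d$. Let $q_{n,s}:=\beta^{n-s}\frac{1-\beta}{1-\beta^n}$ ($s=1,\dots,n$), let $\mathbf{X}_n$ be the random vector equal to $\mathbf{x}_s$ with probability $q_{n,s}$, and $\overline{\mathbf{x}}_n:=\mathbb{E}[\mathbf{X}_n]$. Then $$\mathbb{E}_{\mathbf{X}_n}\|\mathbf{X}_n-\overline{\mathbf{x}}_n\|^2\le2\sum_{t=1}^n\lambda_{n,t}\|\mathbf{x}_t-\mathbf{x}_{t-1}\|^2,\qquad\text{where }\lambda_{n,t}:=\sum_{i=t}^n\sum_{j=1}^{t-1}q_{n,i}q_{n,j}(i-j).$$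
   Context: Norms are Euclidean. An empty sum equals $0$. *)

theory Defs
  imports "HOL-Analysis.Analysis"
begin

definition qw :: "real \<Rightarrow> nat \<Rightarrow> nat \<Rightarrow> real" where
  "qw \<beta> n s = \<beta> ^ (n - s) * (1 - \<beta>) / (1 - \<beta> ^ n)"

definition xbar :: "real \<Rightarrow> nat \<Rightarrow> (nat \<Rightarrow> 'a::euclidean_space) \<Rightarrow> 'a" where
  "xbar \<beta> n x = (\<Sum>s=1..n. qw \<beta> n s *\<^sub>R x s)"

definition lam :: "real \<Rightarrow> nat \<Rightarrow> nat \<Rightarrow> real" where
  "lam \<beta> n t = (\<Sum>i=t..n. \<Sum>j=1..t-1. qw \<beta> n i * qw \<beta> n j * (real i - real j))"

end

theory Submission
  imports Defs
begin

text \<open>By the triangle inequality and convexity of the square, the weighted spread of the points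
  around their mean is at most the weighted mean of all squared pairwise distances, which is twice
  the sum over the pairs \<open>j < i\<close> of \<open>q i * q j * \<parallel>x i - x j\<parallel>\<^sup>2\<close>. The difference \<open>x i - x j\<close>
  telescopes into \<open>i - j\<close> increments \<open>x t - x (t - 1)\<close>, so by Cauchy-Schwarz its squared norm is
  at most \<open>i - j\<close> times the sum of their squared norms. Exchanging the order of summation then
  collects the coefficient \<open>lam \<beta> n t\<close> in front of \<open>\<parallel>x t - x (t - 1)\<parallel>\<^sup>2\<close>.\<close>

lemma sum_telescope_Suc_atMost:
  fixes x :: "nat \<Rightarrow> 'a::ab_group_add"
  assumes "j \<le> i"
  shows "(\<Sum>t=Suc j..i. x t - x (t - 1)) = x i - x j"
  using assms by (induction i) (auto simp: le_Suc_eq)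

lemma norm_diff_power2_le_sum_increments:
  fixes x :: "nat \<Rightarrow> 'a::real_normed_vector"
  assumes "j \<le> i"
  shows "(norm (x i - x j))\<^sup>2 \<le> real (i - j) * (\<Sum>t=Suc j..i. (norm (x t - x (t - 1)))\<^sup>2)"
proof -
  have "norm (x i - x j) \<le> (\<Sum>t=Suc j..i. norm (x t - x (t - 1)))"
    unfolding sum_telescope_Suc_atMost[OF assms, symmetric] by (rule norm_sum)
  then have "(norm (x i - x j))\<^sup>2 \<le> (\<Sum>t=Suc j..i. norm (x t - x (t - 1)))\<^sup>2"
    by (simp add: power_mono)
  also have "\<dots> \<le> (\<Sum>t=Suc j..i. (norm (x t - x (t - 1)))\<^sup>2) * card {Suc j..i}"
    by (rule sum_squared_le_sum_of_squares)
  finally show ?thesis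
    by (simp add: mult.commute)
qed

lemma weighted_sum_sq_dist_mean_le:
  fixes x :: "'i \<Rightarrow> 'a::real_normed_vector"
  assumes "finite A" and q_nonneg: "\<And>s. s \<in> A \<Longrightarrow> 0 \<le> q s" and q_sum: "sum q A = 1"
  shows "(\<Sum>s\<in>A. q s * (norm (x s - (\<Sum>j\<in>A. q j *\<^sub>R x j)))\<^sup>2)
           \<le> (\<Sum>s\<in>A. \<Sum>j\<in>A. q s * q j * (norm (x s - x j))\<^sup>2)"
proof (intro sum_mono)
  fix s assume s: "s \<in> A"
  have "x s - (\<Sum>j\<in>A. q j *\<^sub>R x j) = (\<Sum>j\<in>A. q j *\<^sub>R (x s - x j))"
    by (simp add: scaleR_diff_right sum_subtractf q_sum flip: scaleR_sum_left)
  then have "norm (x s - (\<Sum>j\<in>A. q j *\<^sub>R x j)) \<le> (\<Sum>j\<in>A. q j * norm (x s - x j))"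
    using norm_sum[of "\<lambda>j. q j *\<^sub>R (x s - x j)" A] q_nonneg by simp
  then have "(norm (x s - (\<Sum>j\<in>A. q j *\<^sub>R x j)))\<^sup>2 \<le> (\<Sum>j\<in>A. q j * norm (x s - x j))\<^sup>2"
    by (simp add: power_mono)
  also have "\<dots> \<le> (\<Sum>j\<in>A. q j * (norm (x s - x j))\<^sup>2)"
    using convex_on_sum[OF \<open>finite A\<close> _ convex_power2, of q "\<lambda>j. norm (x s - x j)"] s q_nonneg q_sum
    by auto
  finally have "q s * (norm (x s - (\<Sum>j\<in>A. q j *\<^sub>R x j)))\<^sup>2 \<le> q s * (\<Sum>j\<in>A. q j * (norm (x s - x j))\<^sup>2)"
    using q_nonneg[OF s] by (rule mult_left_mono)
  then show "q s * (norm (x s - (\<Sum>j\<in>A. q j *\<^sub>R x j)))\<^sup>2 \<le> (\<Sum>j\<in>A. q s * q j * (norm (x s - x j))\<^sup>2)"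
    by (simp add: sum_distrib_left mult.assoc)
qed

lemma sum_sum_eq_twice_sum_lower:
  fixes g :: "'i::linorder \<Rightarrow> 'i \<Rightarrow> 'b::semiring_1"
  assumes "finite A" and sym: "\<And>i j. g i j = g j i" and diag: "\<And>i. g i i = 0"
  shows "(\<Sum>i\<in>A. \<Sum>j\<in>A. g i j) = 2 * (\<Sum>i\<in>A. \<Sum>j\<in>{j\<in>A. j < i}. g i j)"
proof -
  have "(\<Sum>j\<in>A. g i j) = (\<Sum>j\<in>{j\<in>A. j < i}. g i j) + (\<Sum>j\<in>{j\<in>A. i < j}. g i j)" for i
  proof -
    have "(\<Sum>j\<in>A. g i j) = (\<Sum>j\<in>A. (if j < i then g i j else 0) + (if i < j then g i j else 0))"
    proof (rule sum.cong[OF refl])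
      show "g i j = (if j < i then g i j else 0) + (if i < j then g i j else 0)" for j
        by (cases i j rule: linorder_cases) (auto simp: diag)
    qed
    then show ?thesis
      by (simp add: sum.distrib sum.inter_filter[OF \<open>finite A\<close>])
  qed
  moreover have "(\<Sum>i\<in>A. \<Sum>j\<in>{j\<in>A. i < j}. g i j) = (\<Sum>j\<in>A. \<Sum>i\<in>{i\<in>A. i < j}. g j i)"
    by (subst sum.swap_restrict[OF \<open>finite A\<close> \<open>finite A\<close>]) (simp only: sym)
  ultimately show ?thesis
    by (simp add: sum.distrib mult_2)
qed

lemma sum_lower_pairs_increments_swap:
  fixes w :: "nat \<Rightarrow> nat \<Rightarrow> 'a::comm_semiring_0"
  shows "(\<Sum>i=1..n. \<Sum>j=1..<i. w i j * (\<Sum>t=Suc j..i. d t))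
           = (\<Sum>t=1..n. (\<Sum>i=t..n. \<Sum>j=1..t-1. w i j) * d t)"
proof -
  have inner: "(\<Sum>j=1..<i. w i j * (\<Sum>t=Suc j..i. d t)) = (\<Sum>t=1..i. (\<Sum>j=1..<t. w i j) * d t)" for i
  proof -
    have "(\<Sum>j=1..<i. w i j * (\<Sum>t=Suc j..i. d t)) = (\<Sum>j\<in>{1..<i}. \<Sum>t\<in>{t\<in>{1..i}. j < t}. w i j * d t)"
    proof (rule sum.cong[OF refl])
      fix j assume "j \<in> {1..<i}"
      then have "{t\<in>{1..i}. j < t} = {Suc j..i}" by auto
      then show "w i j * (\<Sum>t=Suc j..i. d t) = (\<Sum>t\<in>{t\<in>{1..i}. j < t}. w i j * d t)"
        by (simp add: sum_distrib_left)
    qed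
    also have "\<dots> = (\<Sum>t\<in>{1..i}. \<Sum>j\<in>{j\<in>{1..<i}. j < t}. w i j * d t)"
      by (rule sum.swap_restrict) auto
    also have "\<dots> = (\<Sum>t=1..i. (\<Sum>j=1..<t. w i j) * d t)"
    proof (rule sum.cong[OF refl])
      fix t assume "t \<in> {1..i}"
      then have "{j\<in>{1..<i}. j < t} = {1..<t}" by auto
      then show "(\<Sum>j\<in>{j\<in>{1..<i}. j < t}. w i j * d t) = (\<Sum>j=1..<t. w i j) * d t"
        by (simp add: sum_distrib_right)
    qed
    finally show ?thesis .
  qed
  have "(\<Sum>i=1..n. \<Sum>j=1..<i. w i j * (\<Sum>t=Suc j..i. d t))
          = (\<Sum>i\<in>{1..n}. \<Sum>t\<in>{t\<in>{1..n}. t \<le> i}. (\<Sum>j=1..<t. w i j) * d t)"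
  proof (rule sum.cong[OF refl])
    fix i assume "i \<in> {1..n}"
    then have segment: "{t\<in>{1..n}. t \<le> i} = {1..i}" by auto
    show "(\<Sum>j=1..<i. w i j * (\<Sum>t=Suc j..i. d t))
                 = (\<Sum>t\<in>{t\<in>{1..n}. t \<le> i}. (\<Sum>j=1..<t. w i j) * d t)"
      unfolding segment by (rule inner)
  qed
  also have "\<dots> = (\<Sum>t\<in>{1..n}. \<Sum>i\<in>{i\<in>{1..n}. t \<le> i}. (\<Sum>j=1..<t. w i j) * d t)"
    by (rule sum.swap_restrict) auto
  also have "\<dots> = (\<Sum>t=1..n. (\<Sum>i=t..n. \<Sum>j=1..t-1. w i j) * d t)"
  proof (rule sum.cong[OF refl])
    fix t assume "t \<in> {1..n}"
    then have "{i\<in>{1..n}. t \<le> i} = {t..n}" and "{1..<t} = {1..t-1}" by auto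
    then show "(\<Sum>i\<in>{i\<in>{1..n}. t \<le> i}. (\<Sum>j=1..<t. w i j) * d t)
                 = (\<Sum>i=t..n. \<Sum>j=1..t-1. w i j) * d t"
      by (simp add: sum_distrib_right)
  qed
  finally show ?thesis .
qed

lemma sum_lower_pairs_sq_dist_le_increments:
  fixes x :: "nat \<Rightarrow> 'a::real_normed_vector" and w :: "nat \<Rightarrow> nat \<Rightarrow> real"
  assumes "\<And>i j. 0 \<le> w i j"
  shows "(\<Sum>i=1..n. \<Sum>j=1..<i. w i j * (norm (x i - x j))\<^sup>2)
           \<le> (\<Sum>t=1..n. (\<Sum>i=t..n. \<Sum>j=1..t-1. w i j * (real i - real j)) * (norm (x t - x (t - 1)))\<^sup>2)"
proof -
  have "(\<Sum>i=1..n. \<Sum>j=1..<i. w i j * (norm (x i - x j))\<^sup>2)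
          \<le> (\<Sum>i=1..n. \<Sum>j=1..<i. w i j * (real i - real j) * (\<Sum>t=Suc j..i. (norm (x t - x (t - 1)))\<^sup>2))"
  proof (intro sum_mono)
    fix i j :: nat assume "j \<in> {1..<i}"
    then have "(norm (x i - x j))\<^sup>2 \<le> (real i - real j) * (\<Sum>t=Suc j..i. (norm (x t - x (t - 1)))\<^sup>2)"
      using norm_diff_power2_le_sum_increments[of j i x] by (simp add: of_nat_diff)
    then show "w i j * (norm (x i - x j))\<^sup>2
                 \<le> w i j * (real i - real j) * (\<Sum>t=Suc j..i. (norm (x t - x (t - 1)))\<^sup>2)"
      using assms by (simp add: mult_left_mono mult.assoc)
  qed
  also have "\<dots> = (\<Sum>t=1..n. (\<Sum>i=t..n. \<Sum>j=1..t-1. w i j * (real i - real j)) * (norm (x t - x (t - 1)))\<^sup>2)"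
    by (rule sum_lower_pairs_increments_swap)
  finally show ?thesis .
qed

lemma qw_nonneg:
  assumes "0 \<le> \<beta>" "\<beta> < 1"
  shows "0 \<le> qw \<beta> n s"
  using assms unfolding qw_def by (simp add: power_le_one)

lemma sum_qw:
  assumes "0 \<le> \<beta>" "\<beta> < 1" "1 \<le> n"
  shows "(\<Sum>s=1..n. qw \<beta> n s) = 1"
proof -
  have "(\<Sum>s=1..n. \<beta> ^ (n - s)) = (\<Sum>k<n. \<beta> ^ k)"
    by (rule sum.reindex_bij_witness[where i="\<lambda>k. n - k" and j="\<lambda>s. n - s"]) auto
  moreover have "\<beta> ^ n < 1"
    using assms by (simp add: power_less_one_iff)
  ultimately show ?thesis
    using assms unfolding qw_def by (simp add: sum_gp_strict flip: sum_divide_distrib sum_distrib_right)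
qed

theorem proposition4:
  fixes \<beta> :: real and n :: nat and x :: "nat \<Rightarrow> 'a::euclidean_space"
  assumes "0 < \<beta>" "\<beta> < 1" "1 \<le> n"
  shows "(\<Sum>s=1..n. qw \<beta> n s * (norm (x s - xbar \<beta> n x))\<^sup>2)
           \<le> 2 * (\<Sum>t=1..n. lam \<beta> n t * (norm (x t - x (t - 1)))\<^sup>2)"
proof -
  define q where "q = qw \<beta> n"
  have q_nonneg: "0 \<le> q s" for s
    unfolding q_def using assms by (simp add: qw_nonneg)
  have lower: "{j\<in>{1..n}. j < i} = {1..<i}" if "i \<in> {1..n}" for i
    using that by auto
  have "(\<Sum>s=1..n. q s * (norm (x s - xbar \<beta> n x))\<^sup>2)
          \<le> (\<Sum>i=1..n. \<Sum>j=1..n. q i * q j * (norm (x i - x j))\<^sup>2)"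
    using weighted_sum_sq_dist_mean_le[of "{1..n}" q x] q_nonneg sum_qw[of \<beta> n] assms
    unfolding xbar_def q_def by simp
  also have "\<dots> = 2 * (\<Sum>i=1..n. \<Sum>j\<in>{j\<in>{1..n}. j < i}. q i * q j * (norm (x i - x j))\<^sup>2)"
    by (rule sum_sum_eq_twice_sum_lower) (auto simp: norm_minus_commute)
  also have "\<dots> = 2 * (\<Sum>i=1..n. \<Sum>j=1..<i. q i * q j * (norm (x i - x j))\<^sup>2)"
    by (simp only: lower cong: sum.cong)
  also have "\<dots> \<le> 2 * (\<Sum>t=1..n. lam \<beta> n t * (norm (x t - x (t - 1)))\<^sup>2)"
    using sum_lower_pairs_sq_dist_le_increments[where w="\<lambda>i j. q i * q j"] q_nonneg
    unfolding lam_def q_def by (simp add: mult.assoc)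
  finally show ?thesis
    unfolding q_def .
qed

end
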